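(* Let $q$ be a prime power and $1\leq d\leq n-1$. Then $\mathrm{PG}_d(n,q)$ is additive under $\mathrm{EA}(q^{n+1})$.
   Context: $\mathrm{PG}_d(n,q)$ is the design whose points are the points of $\mathrm{PG}(n,q)$ and whose blocks are the point sets of all $d$-dimensional projective subspaces. $\mathrm{EA}(q^{n+1})$ is the elementary abelian group of order $q^{n+1}$. A design $(V,\mathscr B)$ is additive under an abelian group $G$ if there is an injective map $f:V\to G$ such that $\sum_{x\in B}f(x)=0$ for every block $B\in\mathscr B$. *)

theory Defs
  imports "HOL-Analysis.Analysis"
begin

text \<open>Projective geometry PG(n,q) modelled on the vector space F^(n+1) = 'a^'n,
  where 'a is a finite field with q elements and CARD('n) = n+1.
  A point is a 1-dimensional subspace; a d-dimensional projective subspace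
  is a (d+1)-dimensional linear subspace.\<close>

definition PG_points :: "(('a::field)^'n) set set" where
  "PG_points = {U. vec.subspace U \<and> vec.dim U = 1}"

definition PG_blocks :: "nat \<Rightarrow> (('a::field)^'n) set set set" where
  "PG_blocks d = {{P \<in> PG_points. P \<subseteq> W} | W. vec.subspace W \<and> vec.dim W = d + 1}"

definition additive_under :: "'v set \<Rightarrow> 'v set set \<Rightarrow> ('v \<Rightarrow> 'g::ab_group_add) \<Rightarrow> bool" where
  "additive_under V Bs f \<longleftrightarrow> inj_on f V \<and> (\<forall>B\<in>Bs. (\<Sum>x\<in>B. f x) = 0)"

end

theory Submission
  imports Defs "HOL-Algebra.Algebraic_Closure_Type" "HOL-Number_Theory.Residues"
begin

(* Identify F_q^(n+1) F_q-linearly with the field F_(q^(n+1)), realised inside the algebraic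
   closure of F_q as the roots of x^(q^(n+1)) - x, and send the point <v> to v^(q-1); this does
   not depend on the representative. Two representatives give the same value only if their
   quotient is a (q-1)-st root of unity, i.e. lies in F_q, so the map is injective on points.
   For a subspace W of dimension at least 2 write W = U + F_q w with |U| = q^(dim W - 1);
   expanding binomially, the sum of (u + t w)^(q-1) over t in F_q is -w^(q-1) because the power
   sums of F_q vanish below degree q-1, so the sum of v^(q-1) over W is -|U| w^(q-1) = 0.
   Each point of W contributes its value q-1 = -1 times to that sum, so the values on the
   points of W sum to zero. *)

lemma card_finite_field_ge_2:
  assumes "finite (UNIV :: 'a::field set)"
  shows "CARD('a) \<ge> 2"
proof -
  have "card {0, 1::'a} \<le> CARD('a)"
    by (rule card_mono[OF assms]) simp
  then show ?thesis by simp
qed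

lemma of_nat_CARD_eq_0 [simp]: "of_nat CARD('a::ring_1) = (0::'a)"
  using CHAR_dvd_CARD of_nat_eq_0_iff_char_dvd by blast

lemma of_nat_CARD_alg_closure [simp]: "of_nat CARD('a::field) = (0::'a alg_closure)"
  by (metis of_nat_CARD_eq_0 to_ac_0 to_ac_of_nat)

lemma prime_CHAR_finite_field:
  assumes "finite (UNIV :: 'a::field set)"
  shows "Factorial_Ring.prime CHAR('a)"
  using prime_CHAR_semidom finite_imp_CHAR_pos[OF assms] by blast

lemma finite_field_power_card_minus_one:
  assumes "finite (UNIV :: 'a::field set)" and "(x::'a) \<noteq> 0"
  shows "x ^ (CARD('a) - 1) = 1"
proof -
  let ?U = "UNIV - {0::'a}"
  have "(\<Prod>y\<in>?U. x * y) = (\<Prod>y\<in>?U. y)"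
    by (rule prod.reindex_bij_witness[of _ "\<lambda>y. y / x" "\<lambda>y. x * y"]) (use assms(2) in auto)
  moreover have "(\<Prod>y\<in>?U. x * y) = x ^ (CARD('a) - 1) * (\<Prod>y\<in>?U. y)"
    using assms(1) by (simp add: prod.distrib card_Diff_singleton)
  moreover have "(\<Prod>y\<in>?U. y) \<noteq> 0"
    using assms(1) by simp
  ultimately show ?thesis by simp
qed

lemma finite_field_power_eq_self:
  assumes "finite (UNIV :: 'a::field set)" and "[M = 1] (mod (CARD('a) - 1))" and "M \<ge> 1"
  shows "(x::'a) ^ M = x"
proof (cases "x = 0")
  case True
  then show ?thesis using assms(3) by simp
next
  case False
  obtain r where r: "M - 1 = (CARD('a) - 1) * r"
    using cong_to_1_nat[OF assms(2)] by blast
  have "x ^ M = x * (x ^ (CARD('a) - 1)) ^ r"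
    using assms(3) by (metis r Suc_diff_le diff_Suc_1 power_Suc power_mult)
  then show ?thesis
    using finite_field_power_card_minus_one[OF assms(1) False] by simp
qed

lemma
  assumes "n \<ge> 1"
  shows finite_roots_unity_idom: "finite {z::'a::idom. z ^ n = 1}"
    and card_roots_unity_idom_le: "card {z::'a. z ^ n = 1} \<le> n"
proof -
  define P :: "'a poly" where "P = Polynomial.monom 1 n - 1"
  have "Polynomial.coeff P n = 1"
    using assms by (simp add: P_def)
  then have P: "P \<noteq> 0" by auto
  have "Polynomial.degree P \<le> n"
    unfolding P_def by (intro degree_diff_le) (auto simp: degree_monom_le)
  moreover have roots: "{z. z ^ n = 1} = {z. poly P z = 0}"
    by (simp add: P_def poly_monom)
  ultimately show "finite {z::'a. z ^ n = 1}" and "card {z::'a. z ^ n = 1} \<le> n"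
    using poly_roots_finite[OF P] card_poly_roots_bound[OF P] by simp_all
qed

lemma finite_field_ex_power_ne_one:
  assumes "finite (UNIV :: 'a::field set)" and "0 < k" and "k < CARD('a) - 1"
  obtains c where "c \<noteq> (0::'a)" and "c ^ k \<noteq> 1"
proof -
  have "\<not> UNIV - {0::'a} \<subseteq> {z. z ^ k = 1}"
  proof
    assume "UNIV - {0::'a} \<subseteq> {z. z ^ k = 1}"
    then have "card (UNIV - {0::'a}) \<le> card {z::'a. z ^ k = 1}"
      using assms(2) by (intro card_mono finite_roots_unity_idom) auto
    also have "\<dots> \<le> k"
      using assms(2) by (intro card_roots_unity_idom_le) auto
    finally show False
      using assms by (simp add: card_Diff_singleton)
  qed
  then show ?thesis
    using that by blast
qed

lemma sum_powers_finite_field: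
  assumes fin: "finite (UNIV :: 'a::field set)" and k: "k \<le> CARD('a) - 1"
  shows "(\<Sum>t\<in>UNIV. (t::'a) ^ k) = (if k = CARD('a) - 1 then -1 else 0)"
proof -
  have q: "CARD('a) \<ge> 2"
    by (rule card_finite_field_ge_2[OF fin])
  consider "k = CARD('a) - 1" | "k = 0" | "0 < k" "k < CARD('a) - 1"
    using k by linarith
  then show ?thesis
  proof cases
    case 1
    have "(\<Sum>t\<in>UNIV. (t::'a) ^ k) = (\<Sum>t\<in>UNIV - {0}. t ^ k)"
      using 1 q by (intro sum.mono_neutral_right) (auto simp: fin)
    also have "\<dots> = (\<Sum>t\<in>UNIV - {0::'a}. 1)"
      by (intro sum.cong refl) (use 1 finite_field_power_card_minus_one[OF fin] in auto)
    also have "\<dots> = of_nat CARD('a) - 1"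
      using fin q by (simp add: card_Diff_singleton)
    finally show ?thesis
      using 1 by simp
  next
    case 2
    then show ?thesis
      using q by simp
  next
    case 3
    obtain c :: 'a where c: "c \<noteq> 0" "c ^ k \<noteq> 1"
      using finite_field_ex_power_ne_one[OF fin 3] .
    have "(\<Sum>t\<in>UNIV. (t::'a) ^ k) = (\<Sum>t\<in>UNIV. (c * t) ^ k)"
      by (rule sum.reindex_bij_witness[of _ "\<lambda>y. c * y" "\<lambda>y. y / c"]) (use c in auto)
    also have "\<dots> = c ^ k * (\<Sum>t\<in>UNIV. t ^ k)"
      by (simp add: power_mult_distrib sum_distrib_left)
    finally have "(1 - c ^ k) * (\<Sum>t\<in>UNIV. (t::'a) ^ k) = 0"
      by (simp add: algebra_simps)
    then show ?thesis
      using c 3 by simp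
  qed
qed

lemma sum_power_card_minus_one_line:
  assumes fin: "finite (UNIV :: 'a::field set)"
  shows "(\<Sum>t\<in>UNIV. (a + to_ac (t::'a) * b) ^ (CARD('a) - 1)) = - (b ^ (CARD('a) - 1))"
proof -
  let ?n = "CARD('a) - 1"
  have "(\<Sum>t\<in>UNIV. (a + to_ac (t::'a) * b) ^ ?n) =
        (\<Sum>t\<in>UNIV. \<Sum>k\<le>?n. of_nat (?n choose k) * (to_ac t * b) ^ k * a ^ (?n - k))"
    by (intro sum.cong refl) (subst add.commute, rule binomial_ring)
  also have "\<dots> = (\<Sum>k\<le>?n. of_nat (?n choose k) * b ^ k * a ^ (?n - k) * to_ac (\<Sum>t\<in>UNIV. t ^ k))"
    by (subst sum.swap) (simp add: to_ac_sum sum_distrib_left sum_distrib_right power_mult_distrib mult_ac)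
  also have "\<dots> = (\<Sum>k\<le>?n. if k = ?n then - (b ^ ?n) else 0)"
    by (intro sum.cong refl) (simp add: sum_powers_finite_field[OF fin])
  finally show ?thesis by simp
qed

lemma roots_unity_card_minus_one_alg_closure:
  assumes fin: "finite (UNIV :: 'a::field set)"
  shows "{z :: 'a alg_closure. z ^ (CARD('a) - 1) = 1} = to_ac ` (UNIV - {0})"
proof -
  let ?R = "{z :: 'a alg_closure. z ^ (CARD('a) - 1) = 1}"
  have q: "CARD('a) - 1 \<ge> 1"
    using card_finite_field_ge_2[OF fin] by simp
  have sub: "to_ac ` (UNIV - {0}) \<subseteq> ?R"
    using finite_field_power_card_minus_one[OF fin] by (auto simp flip: to_ac_power)
  have "card ?R \<le> card (to_ac ` (UNIV - {0::'a}))"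
    using card_roots_unity_idom_le[OF q] fin
    by (simp add: card_image inj_on_def card_Diff_singleton)
  then show ?thesis
    using card_subset_eq[OF finite_roots_unity_idom[OF q] sub] card_mono[OF finite_roots_unity_idom[OF q] sub]
    by simp
qed

lemma rsquarefree_if_pderiv_nonvanishing:
  fixes p :: "'a::idom poly"
  assumes "p \<noteq> 0" and "\<And>a. poly (pderiv p) a \<noteq> 0"
  shows "rsquarefree p"
  unfolding rsquarefree_def
proof (intro conjI allI assms(1))
  fix a
  have "\<not> [:-a, 1:] ^ 2 dvd p"
  proof
    assume "[:-a, 1:] ^ 2 dvd p"
    then obtain r where r: "p = [:-a, 1:] ^ 2 * r"
      by (elim dvdE)
    have "poly (pderiv p) a = 0"
      unfolding r by (simp only: power2_eq_square pderiv_mult poly_mult poly_add) simp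
    then show False
      using assms(2) by blast
  qed
  then have "Polynomial.order a p < 2"
    using order_1 by (metis dvd_trans le_imp_power_dvd not_le)
  then show "Polynomial.order a p = 0 \<or> Polynomial.order a p = 1"
    by linarith
qed

lemma card_roots_rsquarefree:
  fixes p :: "'a::alg_closed_field poly"
  assumes "rsquarefree p"
  shows "card {x. poly p x = 0} = Polynomial.degree p"
proof -
  have p: "p \<noteq> 0"
    using assms by (simp add: rsquarefree_def)
  obtain A where A: "size A = Polynomial.degree p"
    "p = Polynomial.smult (Polynomial.lead_coeff p) (\<Prod>x\<in>#A. [:-x, 1:])"
    using alg_closed_imp_factorization[OF p] by blast
  have "proots p = proots (\<Prod>x\<in>#A. [:-x, 1:])"
    using p by (subst A(2)) simp
  also have "\<dots> = A"
  proof (induction A)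
    case (add x A)
    have "(\<Prod>y\<in>#A. [:-y, 1:]) \<noteq> (0 :: 'a poly)"
      by (auto simp: prod_mset_zero_iff)
    then have "proots ([:-x, 1:] * (\<Prod>y\<in>#A. [:-y, 1:])) = {#x#} + A"
      using add.IH proots_linear_factor[of "-x"] by (subst proots_mult) auto
    then show ?case
      by simp
  qed simp
  finally have roots: "proots p = A" .
  have "count A a \<le> 1" for a
  proof -
    have "Polynomial.order a p = 0 \<or> Polynomial.order a p = 1"
      using assms by (simp add: rsquarefree_def)
    then show ?thesis
      using p by (auto simp flip: roots)
  qed
  then have "count A a = count (mset_set (set_mset A)) a" for a
    by (cases "a \<in># A") (auto simp: count_mset_set not_in_iff intro: antisym)
  then have "A = mset_set (set_mset A)"
    by (rule multiset_eqI)
  then have "size A = card (set_mset A)"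
    by (metis size_mset_set)
  then show ?thesis
    using A(1) p by (simp flip: roots)
qed

lemma card_roots_power_eq_self:
  assumes "N \<ge> 2" and "of_nat N = (0::'a::alg_closed_field)"
  shows "card {x::'a. x ^ N = x} = N"
proof -
  define P :: "'a poly" where "P = Polynomial.monom 1 N - [:0, 1:]"
  have "Polynomial.coeff P N = 1"
    using assms(1) by (simp add: P_def coeff_pCons split: nat.splits)
  moreover have "Polynomial.degree P \<le> N"
    unfolding P_def by (intro degree_diff_le) (use assms(1) in \<open>auto simp: degree_monom_le\<close>)
  ultimately have deg: "Polynomial.degree P = N"
    by (metis le_antisym le_degree zero_neq_one)
  have "pderiv P = -1"
    using assms(2) by (simp add: P_def pderiv_monom pderiv_diff pderiv_pCons) (simp add: one_pCons)
  then have "rsquarefree P"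
    using deg assms(1) by (intro rsquarefree_if_pderiv_nonvanishing) auto
  moreover have "{x. x ^ N = x} = {x. poly P x = 0}"
    by (simp add: P_def poly_monom)
  ultimately show ?thesis
    using card_roots_rsquarefree[of P] deg by simp
qed

context vector_space
begin

lemma card_span_independent:
  assumes B: "independent B" "finite B"
  shows "card (span B) = CARD('a) ^ card B"
proof -
  define \<Phi> where "\<Phi> u = (\<Sum>v\<in>B. scale (u v) v)" for u
  have span: "span B = \<Phi> ` (B \<rightarrow>\<^sub>E UNIV)"
  proof
    show "span B \<subseteq> \<Phi> ` (B \<rightarrow>\<^sub>E UNIV)"
    proof
      fix x assume "x \<in> span B"
      then obtain u where "x = \<Phi> u"
        unfolding \<Phi>_def span_finite[OF B(2)] by blast
      also have "\<Phi> u = \<Phi> (restrict u B)"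
        unfolding \<Phi>_def by (intro sum.cong) auto
      finally show "x \<in> \<Phi> ` (B \<rightarrow>\<^sub>E UNIV)" by auto
    qed
  qed (auto simp: \<Phi>_def span_finite[OF B(2)])
  have "inj_on \<Phi> (B \<rightarrow>\<^sub>E UNIV)"
  proof (rule inj_onI)
    fix u u' assume u: "u \<in> B \<rightarrow>\<^sub>E UNIV" "u' \<in> B \<rightarrow>\<^sub>E UNIV" and "\<Phi> u = \<Phi> u'"
    then have "(\<Sum>v\<in>B. scale (u v - u' v) v) = 0"
      unfolding \<Phi>_def by (simp add: scale_left_diff_distrib sum_subtractf)
    then have "\<forall>v\<in>B. u v - u' v = 0"
      using B(1) unfolding dependent_finite[OF B(2)] by (auto dest: spec[of _ "\<lambda>v. u v - u' v"])
    then show "u = u'"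
      using u by (intro PiE_ext) auto
  qed
  then have "card (span B) = card (B \<rightarrow>\<^sub>E (UNIV :: 'a set))"
    unfolding span by (rule card_image)
  then show ?thesis
    by (simp add: card_PiE B(2))
qed

lemma card_subspace_eq_power_dim:
  assumes "subspace S" and "finite S"
  shows "card S = CARD('a) ^ dim S"
proof -
  obtain B where B: "B \<subseteq> S" "independent B" "S \<subseteq> span B" "card B = dim S"
    using basis_exists[of S] by metis
  then have "span B = S"
    using span_minimal[OF B(1) assms(1)] by auto
  moreover have "finite B"
    using B(1) assms(2) by (rule finite_subset)
  ultimately show ?thesis
    using card_span_independent[OF B(2)] B(4) by simp
qed

end

interpretation ac: vector_space "\<lambda>c (x::'a::field alg_closure). to_ac c * x"
  by unfold_locales (simp_all add: algebra_simps)

lemma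
  assumes fin: "finite (UNIV :: 'a::field set)" and M: "M = CHAR('a) ^ m" "m > 0"
    and fixed: "\<And>c::'a. c ^ M = c"
  shows subspace_alg_closure_power_fixed: "ac.subspace {x :: 'a alg_closure. x ^ M = x}"
    and card_alg_closure_power_fixed: "card {x :: 'a alg_closure. x ^ M = x} = M"
proof -
  have p: "Factorial_Ring.prime CHAR('a)"
    by (rule prime_CHAR_finite_field[OF fin])
  then have "CHAR('a) ^ 1 \<le> M"
    unfolding M using M(2) prime_gt_0_nat[OF p] by (intro power_increasing) auto
  then have M2: "M \<ge> 2"
    using prime_ge_2_nat[OF p] by simp
  have "of_nat M = (0 :: 'a alg_closure)"
    unfolding M using M(2) by (metis CHAR_alg_closure of_nat_CHAR of_nat_power zero_power)
  then show "card {x :: 'a alg_closure. x ^ M = x} = M"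
    by (rule card_roots_power_eq_self[OF M2])
  show "ac.subspace {x :: 'a alg_closure. x ^ M = x}"
    unfolding ac.subspace_def
  proof (intro conjI ballI allI)
    show "0 \<in> {x :: 'a alg_closure. x ^ M = x}"
      using M2 by simp
    show "x + y \<in> {x. x ^ M = x}" if "x \<in> {x. x ^ M = x}" "y \<in> {x. x ^ M = x}" for x y :: "'a alg_closure"
      using that freshmans_dream'[where 'a="'a alg_closure", of M m] p M(1) by simp
    show "to_ac c * x \<in> {x. x ^ M = x}" if "x \<in> {x. x ^ M = x}" for c and x :: "'a alg_closure"
      using that fixed[of c] by (simp add: power_mult_distrib flip: to_ac_power)
  qed
qed

(* The fixed points of x \<mapsto> x^(p^m) in the algebraic closure, where p^m = 1 mod q - 1,
   form an 'a-vector space with p^m elements; hence q divides p^m. *)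
lemma card_finite_field_prime_power:
  assumes fin: "finite (UNIV :: 'a::field set)"
  obtains j where "CARD('a) = CHAR('a) ^ j"
proof -
  let ?q = "CARD('a)" and ?p = "CHAR('a)"
  have p: "Factorial_Ring.prime ?p"
    by (rule prime_CHAR_finite_field[OF fin])
  have q: "?q \<ge> 2"
    by (rule card_finite_field_ge_2[OF fin])
  have "\<not> ?p dvd ?q - 1"
  proof
    assume "?p dvd ?q - 1"
    with CHAR_dvd_CARD have "?p dvd ?q - (?q - 1)"
      by (rule dvd_diff_nat)
    with p q show False
      by simp
  qed
  then have "coprime ?p (?q - 1)"
    using p by (simp add: prime_imp_coprime)
  define m where "m = totient (?q - 1)"
  have m: "m > 0"
    unfolding m_def using q by simp
  have cong: "[?p ^ m = 1] (mod (?q - 1))"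
    unfolding m_def by (rule euler_theorem) fact
  have "?p ^ m \<ge> 1"
    using prime_gt_0_nat[OF p] by simp
  then have fixed: "c ^ (?p ^ m) = c" for c :: 'a
    by (rule finite_field_power_eq_self[OF fin cong])
  let ?E = "{x :: 'a alg_closure. x ^ (?p ^ m) = x}"
  have card: "card ?E = ?p ^ m"
    using card_alg_closure_power_fixed[OF fin refl m fixed] .
  moreover have "finite ?E"
    using card prime_gt_0_nat[OF p] by (intro card_ge_0_finite) simp
  ultimately have dim: "?q ^ ac.dim ?E = ?p ^ m"
    using ac.card_subspace_eq_power_dim[OF subspace_alg_closure_power_fixed[OF fin refl m fixed]]
    by simp
  have "ac.dim ?E \<noteq> 0"
  proof
    assume "ac.dim ?E = 0"
    with dim have "?p ^ m = 1"
      by simp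
    with one_less_power[OF prime_gt_1_nat[OF p] m] show False
      by simp
  qed
  then have "?q dvd ?q ^ ac.dim ?E"
    by simp
  then have "?q dvd ?p ^ m"
    by (simp only: dim)
  then show ?thesis
    using that divides_primepow_nat[OF p] by blast
qed

lemma subfield_alg_closure_card_power:
  assumes fin: "finite (UNIV :: 'a::field set)" and N: "N \<ge> 1"
  obtains K where "ac.subspace (K :: 'a alg_closure set)" and "finite K" and "card K = CARD('a) ^ N"
    and "\<forall>x\<in>K. \<forall>y\<in>K. x * y \<in> K"
proof -
  let ?q = "CARD('a)"
  obtain j where j: "?q = CHAR('a) ^ j"
    using card_finite_field_prime_power[OF fin] .
  have q: "?q \<ge> 2"
    by (rule card_finite_field_ge_2[OF fin])
  then have jN: "j * N > 0"
    using j N by (cases j) auto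
  have "[?q = 1] (mod (?q - 1))"
    unfolding cong_to_1'_nat using q by (intro disjI2 exI[of _ 1]) simp
  then have "[?q ^ N = 1] (mod (?q - 1))"
    using cong_pow by fastforce
  then have fixed: "c ^ (?q ^ N) = c" for c :: 'a
    using q by (intro finite_field_power_eq_self[OF fin]) auto
  have M: "?q ^ N = CHAR('a) ^ (j * N)"
    unfolding j by (simp add: power_mult)
  let ?K = "{x :: 'a alg_closure. x ^ (?q ^ N) = x}"
  have "card ?K = ?q ^ N"
    using card_alg_closure_power_fixed[OF fin M jN fixed] .
  moreover have "finite ?K"
    using calculation q by (intro card_ge_0_finite) simp
  moreover have "ac.subspace ?K"
    using subspace_alg_closure_power_fixed[OF fin M jN fixed] .
  moreover have "\<forall>x\<in>?K. \<forall>y\<in>?K. x * y \<in> ?K"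
    by (simp add: power_mult_distrib)
  ultimately show ?thesis
    using that by blast
qed

context vector_space
begin

lemma subspace_hyperplane_line_decomposition:
  assumes W: "subspace W" and dim: "dim W \<ge> 1"
  obtains B w where "independent B" and "finite B" and "card B = dim W - 1"
    and "bij_betw (\<lambda>(u, t). u + scale t w) (span B \<times> UNIV) W"
proof -
  obtain BW where BW: "BW \<subseteq> W" "independent BW" "W \<subseteq> span BW" "card BW = dim W"
    using basis_exists[of W] by metis
  then have span_BW: "span BW = W"
    using span_minimal[OF BW(1) W] by auto
  have fin: "finite BW"
    using BW(4) dim by (metis card.infinite not_one_le_zero)
  then obtain w where w: "w \<in> BW"
    using BW(4) dim by fastforce
  define B where "B = BW - {w}"
  have indep_B: "independent B"
    unfolding B_def using BW(2) by (rule independent_mono) auto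
  have fin_B: "finite B" and card_B: "card B = dim W - 1"
    unfolding B_def using BW(4) fin w by simp_all
  have w_notin: "w \<notin> span B"
    using BW(2) w unfolding B_def dependent_def by blast
  have "bij_betw (\<lambda>(u, t). u + scale t w) (span B \<times> UNIV) W"
  proof (rule bij_betw_imageI)
    show "inj_on (\<lambda>(u, t). u + scale t w) (span B \<times> UNIV)"
    proof (rule inj_onI, clarify)
      fix u t u' t' assume u: "u \<in> span B" "u' \<in> span B" and eq: "u + scale t w = u' + scale t' w"
      then have diff: "scale (t - t') w = u' - u"
        by (simp add: scale_left_diff_distrib algebra_simps)
      have "t = t'"
      proof (rule ccontr)
        assume "t \<noteq> t'"
        then have "w = scale (inverse (t - t')) (u' - u)"
          by (simp flip: diff)
        then have "w \<in> span B"
          using u by (simp add: span_diff span_scale)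
        then show False
          using w_notin by contradiction
      qed
      then show "u = u' \<and> t = t'"
        using diff by simp
    qed
    show "(\<lambda>(u, t). u + scale t w) ` (span B \<times> UNIV) = W"
    proof
      have "span B \<subseteq> W"
        using span_mono[of B BW] span_BW unfolding B_def by auto
      then show "(\<lambda>(u, t). u + scale t w) ` (span B \<times> UNIV) \<subseteq> W"
        using w BW(1) W by (auto intro: subspace_add subspace_scale)
      show "W \<subseteq> (\<lambda>(u, t). u + scale t w) ` (span B \<times> UNIV)"
      proof
        fix x assume "x \<in> W"
        then have "x \<in> span (insert w B)"
          using span_BW w unfolding B_def by (simp add: insert_absorb)
        then obtain t where "x - scale t w \<in> span B"
          using span_breakdown_eq by blast
        then show "x \<in> (\<lambda>(u, t). u + scale t w) ` (span B \<times> UNIV)"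
          by (intro image_eqI[of _ _ "(x - scale t w, t)"]) auto
      qed
    qed
  qed
  then show ?thesis
    using that indep_B fin_B card_B by blast
qed

lemma sum_subspace_power_card_minus_one:
  fixes \<psi> :: "'b \<Rightarrow> 'a alg_closure"
  assumes fin: "finite (UNIV :: 'a set)"
    and lin: "Vector_Spaces.linear scale (\<lambda>c x. to_ac c * x) \<psi>"
    and W: "subspace W" and dim: "dim W \<ge> 2"
  shows "(\<Sum>v\<in>W. \<psi> v ^ (CARD('a) - 1)) = 0"
proof -
  interpret \<psi>: Vector_Spaces.linear scale "\<lambda>c x. to_ac c * x" \<psi>
    by (rule lin)
  let ?n = "CARD('a) - 1"
  obtain B w where B: "independent B" "finite B" "card B = dim W - 1"
    and bij: "bij_betw (\<lambda>(u, t). u + scale t w) (span B \<times> UNIV) W"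
    using subspace_hyperplane_line_decomposition[OF W] dim by auto
  have "(\<Sum>v\<in>W. \<psi> v ^ ?n) = (\<Sum>z\<in>span B \<times> UNIV. \<psi> ((\<lambda>(u, t). u + scale t w) z) ^ ?n)"
    by (rule sum.reindex_bij_betw[OF bij, symmetric])
  also have "\<dots> = (\<Sum>u\<in>span B. \<Sum>t\<in>UNIV. (\<psi> u + to_ac t * \<psi> w) ^ ?n)"
    unfolding sum.cartesian_product by (simp add: case_prod_unfold \<psi>.add \<psi>.scale)
  also have "\<dots> = (\<Sum>u\<in>span B. - (\<psi> w ^ ?n))"
    by (intro sum.cong refl sum_power_card_minus_one_line[OF fin])
  also have "\<dots> = - (of_nat (CARD('a) ^ (dim W - 1)) * \<psi> w ^ ?n)"
    using card_span_independent[OF B(1,2)] B(3) by simp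
  also have "of_nat (CARD('a) ^ (dim W - 1)) = (0 :: 'a alg_closure)"
    using dim by (simp add: of_nat_power)
  finally show ?thesis
    by simp
qed

end

locale vec_field_embedding =
  fixes \<psi> :: "'a::field ^ 'n::finite \<Rightarrow> 'a alg_closure"
  assumes finite_scalars: "finite (UNIV :: 'a set)"
    and linear_psi: "Vector_Spaces.linear (*s) (\<lambda>c x. to_ac c * x) \<psi>"
    and inj_psi: "inj \<psi>"
    and mult_closed: "\<psi> x * \<psi> y \<in> range \<psi>"

lemma ex_vec_field_embedding:
  assumes fin: "finite (UNIV :: 'a::field set)"
  shows "\<exists>\<psi> :: 'a ^ 'n::finite \<Rightarrow> 'a alg_closure. vec_field_embedding \<psi>"
proof -
  have "CARD('n) \<ge> 1"
    by (simp add: Suc_leI)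
  then obtain K :: "'a alg_closure set" where K: "ac.subspace K" "finite K" "card K = CARD('a) ^ CARD('n)"
    and mult: "\<forall>x\<in>K. \<forall>y\<in>K. x * y \<in> K"
    using subfield_alg_closure_card_power[OF fin] by blast
  have "CARD('a) ^ ac.dim K = CARD('a) ^ CARD('n)"
    using ac.card_subspace_eq_power_dim[OF K(1,2)] K(3) by simp
  then have dim: "ac.dim K = vec.dim (UNIV :: ('a ^ 'n) set)"
    using card_finite_field_ge_2[OF fin] by (simp add: power_inject_exp card_cart_basis)
  obtain C where C: "C \<subseteq> K" "ac.independent C" "K \<subseteq> ac.span C" "card C = ac.dim K"
    using ac.basis_exists[of K] by metis
  interpret pair: vector_space_pair "(*s) :: 'a \<Rightarrow> 'a ^ 'n \<Rightarrow> 'a ^ 'n" "\<lambda>c (x::'a alg_closure). to_ac c * x" ..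
  have "card (cart_basis :: ('a ^ 'n) set) = vec.dim (UNIV :: ('a ^ 'n) set)"
    by (simp add: card_cart_basis vec_dim_card)
  then obtain \<psi> :: "'a ^ 'n \<Rightarrow> 'a alg_closure"
    where \<psi>: "Vector_Spaces.linear (*s) (\<lambda>c x. to_ac c * x) \<psi>" "range \<psi> = K" "inj \<psi>"
    using pair.finite_basis_to_basis_subspace_isomorphism[OF vec.subspace_UNIV K(1) dim[symmetric]
        finite_cart_basis subset_UNIV independent_cart_basis _ _ finite_subset[OF C(1) K(2)] C] by auto
  have "vec_field_embedding \<psi>"
    unfolding vec_field_embedding_def using fin \<psi> mult by blast
  then show ?thesis
    by blast
qed

lemma finite_UNIV_vec:
  assumes "finite (UNIV :: 'a set)"
  shows "finite (UNIV :: ('a ^ 'n) set)"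
proof -
  have "CARD('a ^ 'n) > 0"
    using assms by (simp add: card_gt_0_iff)
  then show ?thesis
    by (rule card_ge_0_finite)
qed

lemma PG_point_eq_span:
  assumes P: "P \<in> (PG_points :: ('a::field ^ 'n) set set)" and v: "v \<in> P" "v \<noteq> 0"
  shows "P = vec.span {v}"
proof -
  have "vec.subspace P" and "vec.dim P = 1"
    using P by (auto simp: PG_points_def)
  moreover have "vec.span {v} \<subseteq> P"
    using v \<open>vec.subspace P\<close> by (intro vec.span_minimal) auto
  moreover have "vec.dim (vec.span {v}) = 1"
    using v by simp
  ultimately show ?thesis
    using vec.subspace_dim_equal[OF vec.subspace_span, of P "{v}"] by simp
qed

lemma span_singleton_in_PG_points:
  assumes "(v :: 'a::field ^ 'n) \<noteq> 0"
  shows "vec.span {v} \<in> PG_points"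
  using assms by (simp add: PG_points_def vec.subspace_span)

lemma PG_point_has_nonzero:
  assumes "P \<in> (PG_points :: ('a::field ^ 'n) set set)"
  obtains v where "v \<in> P" and "v \<noteq> 0"
proof -
  have "vec.dim P = 1"
    using assms by (simp add: PG_points_def)
  then have "\<not> P \<subseteq> {0}"
    using vec.dim_eq_0[of P] by auto
  then show ?thesis
    using that by auto
qed

lemma sum_PG_points_in_subspace:
  fixes h :: "'a::field ^ 'n \<Rightarrow> 'c::comm_monoid_add"
  assumes fin: "finite (UNIV :: 'a set)" and W: "vec.subspace W"
  shows "(\<Sum>P\<in>{P \<in> PG_points. P \<subseteq> W}. \<Sum>v\<in>P - {0}. h v) = (\<Sum>v\<in>W - {0}. h v)"
proof -
  let ?Bl = "{P \<in> PG_points. P \<subseteq> W}"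
  have finV: "finite (UNIV :: ('a ^ 'n) set)"
    by (rule finite_UNIV_vec[OF fin])
  have union: "W - {0} = (\<Union>P\<in>?Bl. P - {0})"
  proof
    show "W - {0} \<subseteq> (\<Union>P\<in>?Bl. P - {0})"
    proof
      fix x assume x: "x \<in> W - {0}"
      then have "vec.span {x} \<subseteq> W"
        using W by (intro vec.span_minimal) auto
      then have "vec.span {x} \<in> ?Bl"
        using x span_singleton_in_PG_points by auto
      moreover have "x \<in> vec.span {x} - {0}"
        using x by (simp add: vec.span_base)
      ultimately show "x \<in> (\<Union>P\<in>?Bl. P - {0})"
        by blast
    qed
  qed auto
  have disjoint: "(P - {0}) \<inter> (P' - {0}) = {}" if "P \<in> ?Bl" "P' \<in> ?Bl" "P \<noteq> P'" for P P'
  proof (rule ccontr)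
    assume "(P - {0}) \<inter> (P' - {0}) \<noteq> {}"
    then obtain x where "x \<in> P" "x \<in> P'" "x \<noteq> 0"
      by blast
    then have "P = P'"
      using that PG_point_eq_span by (metis (no_types, lifting) mem_Collect_eq)
    with that show False
      by simp
  qed
  have "finite ?Bl"
    by (rule finite_subset[OF subset_UNIV]) (simp add: Finite_Set.finite_set finV)
  then show ?thesis
    unfolding union using disjoint
    by (intro sum.UNION_disjoint[symmetric]) (auto intro: finite_subset[OF subset_UNIV finV])
qed

lemma sum_PG_point_homogeneous:
  fixes g :: "'a::field ^ 'n \<Rightarrow> 'c::semiring_1"
  assumes fin: "finite (UNIV :: 'a set)" and P: "P \<in> PG_points" "v \<in> P" "v \<noteq> 0"
    and hom: "\<And>c x. c \<noteq> 0 \<Longrightarrow> g (c *s x) = g x"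
  shows "(\<Sum>x\<in>P - {0}. g x) = of_nat (CARD('a) - 1) * g v"
proof -
  have "P - {0} = (\<lambda>c. c *s v) ` (UNIV - {0})"
    using PG_point_eq_span[OF P] P(3) by (auto simp: vec.span_singleton)
  moreover have "inj_on (\<lambda>c. c *s v) (UNIV - {0})"
    using P(3) by (intro inj_onI) (metis vec.scale_cancel_right)
  ultimately have "(\<Sum>x\<in>P - {0}. g x) = (\<Sum>c\<in>UNIV - {0}. g (c *s v))"
    by (simp add: sum.reindex)
  also have "\<dots> = (\<Sum>c\<in>UNIV - {0::'a}. g v)"
    by (intro sum.cong refl) (simp add: hom)
  also have "\<dots> = of_nat (CARD('a) - 1) * g v"
    using fin by (simp add: card_Diff_singleton)
  finally show ?thesis .
qed

context vec_field_embedding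
begin

sublocale psi: Vector_Spaces.linear "(*s)" "\<lambda>c x. to_ac c * x" \<psi>
  by (rule linear_psi)

definition power_map :: "'a ^ 'n \<Rightarrow> 'a ^ 'n" where
  "power_map v = inv_into UNIV \<psi> (\<psi> v ^ (CARD('a) - 1))"

(* Summing over the q - 1 nonzero vectors of a point avoids choosing a representative;
   by psi_point_map this is -power_map v for any of them. *)
definition point_map :: "('a ^ 'n) set \<Rightarrow> 'a ^ 'n" where
  "point_map P = (\<Sum>v\<in>P - {0}. power_map v)"

lemma psi_power_map: "\<psi> (power_map v) = \<psi> v ^ (CARD('a) - 1)"
proof -
  have "\<psi> v ^ Suc k \<in> range \<psi>" for k
  proof (induction k)
    case (Suc k)
    then obtain y where "\<psi> v ^ Suc k = \<psi> y"
      by blast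
    then show ?case
      using mult_closed[of v y] by simp
  qed simp
  moreover have "CARD('a) - 1 = Suc (CARD('a) - 2)"
    using card_finite_field_ge_2[OF finite_scalars] by simp
  ultimately show ?thesis
    unfolding power_map_def by (metis f_inv_into_f)
qed

lemma psi_power_scale:
  assumes "c \<noteq> 0"
  shows "\<psi> (c *s v) ^ (CARD('a) - 1) = \<psi> v ^ (CARD('a) - 1)"
  using finite_field_power_card_minus_one[OF finite_scalars assms]
  by (simp add: psi.scale power_mult_distrib flip: to_ac_power)

lemma psi_point_map:
  assumes "P \<in> PG_points" and "v \<in> P" and "v \<noteq> 0"
  shows "\<psi> (point_map P) = - (\<psi> v ^ (CARD('a) - 1))"
proof -
  have "\<psi> (point_map P) = (\<Sum>x\<in>P - {0}. \<psi> x ^ (CARD('a) - 1))"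
    unfolding point_map_def psi.sum psi_power_map ..
  also have "\<dots> = of_nat (CARD('a) - 1) * \<psi> v ^ (CARD('a) - 1)"
    by (rule sum_PG_point_homogeneous[OF finite_scalars assms psi_power_scale])
  also have "of_nat (CARD('a) - 1) = (-1 :: 'a alg_closure)"
    using card_finite_field_ge_2[OF finite_scalars] by (simp add: of_nat_diff)
  finally show ?thesis
    by simp
qed

lemma inj_on_point_map: "inj_on point_map PG_points"
proof (rule inj_onI)
  fix P P' assume P: "P \<in> PG_points" and P': "P' \<in> PG_points" and eq: "point_map P = point_map P'"
  obtain v where v: "v \<in> P" "v \<noteq> 0"
    using PG_point_has_nonzero[OF P] .
  obtain v' where v': "v' \<in> P'" "v' \<noteq> 0"
    using PG_point_has_nonzero[OF P'] .
  have nz: "\<psi> v \<noteq> 0" "\<psi> v' \<noteq> 0"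
    using v(2) v'(2) inj_psi psi.zero by (metis injD)+
  have "(\<psi> v / \<psi> v') ^ (CARD('a) - 1) = 1"
    using psi_point_map[OF P v] psi_point_map[OF P' v'] eq nz by (simp add: power_divide)
  then obtain c where "\<psi> v / \<psi> v' = to_ac c"
    using roots_unity_card_minus_one_alg_closure[OF finite_scalars] by blast
  then have "\<psi> v = \<psi> (c *s v')"
    using nz by (simp add: psi.scale field_simps)
  then have "v \<in> P'"
    using inj_psi v'(1) P' by (auto simp: inj_eq PG_points_def intro: vec.subspace_scale)
  then show "P = P'"
    using PG_point_eq_span[OF P v] PG_point_eq_span[OF P' _ v(2)] by simp
qed

lemma sum_point_map_block:
  assumes "1 \<le> d" and "Bl \<in> PG_blocks d"
  shows "(\<Sum>P\<in>Bl. point_map P) = 0"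
proof -
  obtain W where Bl: "Bl = {P \<in> PG_points. P \<subseteq> W}" and W: "vec.subspace W" "vec.dim W = d + 1"
    using assms(2) unfolding PG_blocks_def by blast
  have "\<psi> (\<Sum>P\<in>Bl. point_map P) = (\<Sum>v\<in>W - {0}. \<psi> v ^ (CARD('a) - 1))"
    unfolding Bl point_map_def sum_PG_points_in_subspace[OF finite_scalars W(1)] psi.sum psi_power_map ..
  also have "\<dots> = (\<Sum>v\<in>W. \<psi> v ^ (CARD('a) - 1))"
    using card_finite_field_ge_2[OF finite_scalars] finite_subset[OF subset_UNIV finite_UNIV_vec[OF finite_scalars]]
    by (intro sum.mono_neutral_left) auto
  also have "\<dots> = 0"
    using W(2) assms(1) by (intro vec.sum_subspace_power_card_minus_one[OF finite_scalars linear_psi W(1)]) simp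
  finally show ?thesis
    by (metis inj_eq inj_psi psi.zero)
qed

end

theorem corollary5p2:
  fixes d :: nat
  assumes "finite (UNIV :: ('a::field) set)"
    and "1 \<le> d" and "d + 2 \<le> CARD('n::finite)"
  shows "\<exists>f :: ('a^'n) set \<Rightarrow> 'a^'n.
           additive_under (PG_points :: ('a^'n) set set) (PG_blocks d) f"
proof -
  obtain \<psi> :: "'a ^ 'n \<Rightarrow> 'a alg_closure" where "vec_field_embedding \<psi>"
    using ex_vec_field_embedding[OF assms(1)] by blast
  then interpret vec_field_embedding \<psi> .
  have "additive_under PG_points (PG_blocks d) point_map"
    unfolding additive_under_def using inj_on_point_map sum_point_map_block[OF assms(2)] by blast
  then show ?thesis
    by blast
qed

end
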